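(* Let $N\geq 1$, let $J=\bigoplus_{k=1}^N\begin{bmatrix}0&1\\-1&0\end{bmatrix}$ be the $2N\times 2N$ symplectic form, let $V$ be any real symmetric $2N\times 2N$ matrix, and let $C$ be any complex $2N\times 2N$ matrix. Set $R_C\coloneqq \operatorname{Re}(C^\dagger C)$, $I_C\coloneqq \operatorname{Im}(C^\dagger C)$ (real and imaginary parts taken entrywise) and $\tilde V\coloneqq JV$. Then for every integer $l\geq 0$, $$2\operatorname{tr}\left[I_C J\tilde V^{2l+1}\right]+\operatorname{tr}\left[R_C J\tilde V^{2l}\right]=0,$$ where $\tilde V^{0}$ is the identity matrix.
   Context: In the paper, $V$ is the covariance matrix $V_{kl}=\frac12\langle\{\hat\xi_k,\hat\xi_l\}\rangle$ of an $N$-mode state with quadrature vector $\hat{\vec\xi}=(\hat x_1,\hat p_1,\dots,\hat x_N,\hat p_N)^T$, and $C$ is the matrix whose $k$-th row is the coefficient vector $\vec c_k\in\mathbb{C}^{2N}$ of a linear Lindblad operator $\hat L_k=\vec c_k\cdot\hat{\vec\xi}$. The quantities $2\operatorname{tr}(I_CJ\tilde V^k)+\operatorname{tr}(R_CJ\tilde V^{k-1})$, $k=1,\dots,2N$, are the expressions whose vanishing gives necessary conditions for stabilizability; the theorem says those with odd $k$ vanish identically. *)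

theory Defs
  imports "Jordan_Normal_Form.Matrix" Complex_Main
begin

text \<open>The 2N x 2N symplectic form J = direct sum of N copies of [[0,1],[-1,0]]
  (0-indexed: J(2k,2k+1) = 1, J(2k+1,2k) = -1, all other entries 0).\<close>
definition sympl_form :: "nat \<Rightarrow> real mat" where
  "sympl_form N = mat (2*N) (2*N) (\<lambda>(i,j).
     if even i \<and> j = i + 1 then 1
     else if odd i \<and> i = j + 1 then -1
     else 0)"

definition dagger :: "complex mat \<Rightarrow> complex mat" where
  "dagger C = transpose_mat (map_mat cnj C)"

definition mat_trace :: "'a::comm_monoid_add mat \<Rightarrow> 'a" where
  "mat_trace A = (\<Sum>i<dim_row A. A $$ (i,i))"

end

theory Submission
  imports Defs
begin

(* Since J is skew with J * J = -1 and V is symmetric, Vt = J * V satisfies Vt^T * J = J * (-Vt),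
   hence (J * Vt^m)^T = - J * (-Vt)^m: the matrix J * Vt^m is skew for even m and symmetric
   for odd m. On the other hand C^dagger C is Hermitian, so its real part is symmetric and its
   imaginary part is skew. The trace of a symmetric matrix times a skew one vanishes, so both
   traces in the theorem are zero separately. *)

lemma mat_trace_transpose:
  assumes "A \<in> carrier_mat n n"
  shows "mat_trace (transpose_mat A) = mat_trace A"
  using assms unfolding mat_trace_def by simp

lemma mat_trace_uminus:
  fixes A :: "'a::ab_group_add mat"
  assumes "A \<in> carrier_mat n n"
  shows "mat_trace (- A) = - mat_trace A"
  using assms unfolding mat_trace_def sum_negf[symmetric] by (intro sum.cong) auto

lemma mat_trace_mult_comm:
  fixes A B :: "'a::comm_semiring_0 mat"
  assumes "A \<in> carrier_mat n m" and "B \<in> carrier_mat m n"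
  shows "mat_trace (A * B) = mat_trace (B * A)"
proof -
  have "mat_trace (A * B) = (\<Sum>i<n. \<Sum>k<m. A $$ (i,k) * B $$ (k,i))"
    using assms by (simp add: mat_trace_def scalar_prod_def atLeast0LessThan)
  also have "\<dots> = (\<Sum>k<m. \<Sum>i<n. B $$ (k,i) * A $$ (i,k))"
    by (subst sum.swap) (simp add: mult.commute)
  also have "\<dots> = mat_trace (B * A)"
    using assms by (simp add: mat_trace_def scalar_prod_def atLeast0LessThan)
  finally show ?thesis .
qed

lemma mat_trace_mult_symmetric_skew:
  fixes A B :: "'a::linordered_idom mat"
  assumes A: "A \<in> carrier_mat n n" and B: "B \<in> carrier_mat n n"
    and "transpose_mat A = A" and "transpose_mat B = - B"
  shows "mat_trace (A * B) = 0"
proof -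
  have "mat_trace (A * B) = mat_trace (transpose_mat (A * B))"
    using A B by (simp add: mat_trace_transpose[of _ n])
  also have "\<dots> = mat_trace (- B * A)"
    using assms by (simp add: transpose_mult)
  also have "\<dots> = - mat_trace (A * B)"
    using A B by (simp add: mat_trace_uminus[of _ n] mat_trace_mult_comm[of B n n A])
  finally show ?thesis
    by (metis neg_equal_zero)
qed

lemma pow_mat_Suc_left:
  assumes "A \<in> carrier_mat n n"
  shows "A ^\<^sub>m Suc k = A * A ^\<^sub>m k"
proof (induction k)
  case 0
  show ?case using assms by simp
next
  case (Suc k)
  have "A ^\<^sub>m Suc (Suc k) = (A * A ^\<^sub>m k) * A"
    using Suc.IH by simp
  also have "\<dots> = A * A ^\<^sub>m Suc k"
    using assms by (simp add: assoc_mult_mat[of _ n n _ n _ n])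
  finally show ?case .
qed

lemma transpose_pow_mat:
  fixes A :: "'a::comm_semiring_1 mat"
  assumes "A \<in> carrier_mat n n"
  shows "transpose_mat (A ^\<^sub>m k) = transpose_mat A ^\<^sub>m k"
proof (induction k)
  case 0
  show ?case using assms by simp
next
  case (Suc k)
  have "transpose_mat (A ^\<^sub>m Suc k) = transpose_mat A * transpose_mat (A ^\<^sub>m k)"
    using assms by (simp add: transpose_mult[of _ n n _ n])
  also have "\<dots> = transpose_mat A ^\<^sub>m Suc k"
    using assms Suc.IH pow_mat_Suc_left[of "transpose_mat A" n k] by simp
  finally show ?case .
qed

lemma pow_mat_intertwine:
  assumes A: "A \<in> carrier_mat n n" and B: "B \<in> carrier_mat n n" and J: "J \<in> carrier_mat n n"
    and AJ: "A * J = J * B"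
  shows "A ^\<^sub>m k * J = J * B ^\<^sub>m k"
proof (induction k)
  case 0
  show ?case using A B J by simp
next
  case (Suc k)
  have "A ^\<^sub>m Suc k * J = A ^\<^sub>m k * (A * J)"
    using A J by (simp add: assoc_mult_mat[of _ n n _ n _ n])
  also have "\<dots> = (A ^\<^sub>m k * J) * B"
    using A B J by (simp add: AJ assoc_mult_mat[of _ n n _ n _ n])
  also have "\<dots> = J * B ^\<^sub>m Suc k"
    using B J by (simp add: Suc.IH assoc_mult_mat[of _ n n _ n _ n])
  finally show ?case .
qed

lemma uminus_pow_mat:
  fixes A :: "'a::ring_1 mat"
  assumes "A \<in> carrier_mat n n"
  shows "(- A) ^\<^sub>m k = (if even k then A ^\<^sub>m k else - (A ^\<^sub>m k))"
  by (induction k) (use assms in auto)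

lemma transpose_skew_mult_pow:
  fixes J V :: "'a::comm_ring_1 mat"
  assumes J: "J \<in> carrier_mat n n" and V: "V \<in> carrier_mat n n"
    and skew: "transpose_mat J = - J" and JJ: "J * J = - 1\<^sub>m n"
    and sym: "transpose_mat V = V"
  shows "transpose_mat (J * (J * V) ^\<^sub>m k) =
    (if even k then - (J * (J * V) ^\<^sub>m k) else J * (J * V) ^\<^sub>m k)"
proof -
  let ?T = "J * V"
  have T: "?T \<in> carrier_mat n n"
    using J V by simp
  have "transpose_mat ?T * J = - (V * (J * J))"
    using J V by (simp add: transpose_mult[of _ n n _ n] skew sym assoc_mult_mat[of _ n n _ n _ n])
  also have "\<dots> = - ((J * J) * V)"
    using V by (simp add: JJ)
  also have "\<dots> = J * - ?T"
    using J V by (simp add: assoc_mult_mat[of _ n n _ n _ n])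
  finally have "transpose_mat ?T ^\<^sub>m k * J = J * (- ?T) ^\<^sub>m k"
    using J T by (intro pow_mat_intertwine[of _ n]) auto
  moreover have "transpose_mat (J * ?T ^\<^sub>m k) = - (transpose_mat ?T ^\<^sub>m k * J)"
    using J V by (simp add: transpose_mult[of _ n n _ n] transpose_pow_mat[of _ n] skew carrier_matD)
  ultimately show ?thesis
    using J T by (simp add: uminus_pow_mat[of _ n])
qed

lemma dagger_carrier_mat [simp]: "C \<in> carrier_mat n m \<Longrightarrow> dagger C \<in> carrier_mat m n"
  unfolding dagger_def by simp

lemma dagger_dagger [simp]: "dagger (dagger C) = C"
  unfolding dagger_def by (rule eq_matI) auto

lemma dagger_mult:
  assumes "A \<in> carrier_mat n m" and "B \<in> carrier_mat m k"
  shows "dagger (A * B) = dagger B * dagger A"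
  using assms unfolding dagger_def
  by (intro eq_matI) (auto simp: scalar_prod_def mult.commute)

lemma dagger_gram: "C \<in> carrier_mat n m \<Longrightarrow> dagger (dagger C * C) = dagger C * C"
  by (simp add: dagger_mult[of _ m n _ m])

lemma hermitian_entry:
  assumes "M \<in> carrier_mat n n" and "dagger M = M" and "i < n" and "j < n"
  shows "M $$ (j, i) = cnj (M $$ (i, j))"
proof -
  have "M $$ (j, i) = dagger M $$ (j, i)"
    using assms(2) by simp
  also have "\<dots> = cnj (M $$ (i, j))"
    using assms(1,3,4) by (simp add: dagger_def)
  finally show ?thesis .
qed

lemma transpose_Re_hermitian:
  assumes "M \<in> carrier_mat n n" and "dagger M = M"
  shows "transpose_mat (map_mat Re M) = map_mat Re M"
proof (rule eq_matI)
  fix i j assume "i < dim_row (map_mat Re M)" and "j < dim_col (map_mat Re M)"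
  then have "M $$ (j, i) = cnj (M $$ (i, j))" and "i < n" and "j < n"
    using assms by (auto intro: hermitian_entry)
  then show "transpose_mat (map_mat Re M) $$ (i, j) = map_mat Re M $$ (i, j)"
    using assms(1) by simp
qed (use assms in auto)

lemma transpose_Im_hermitian:
  assumes "M \<in> carrier_mat n n" and "dagger M = M"
  shows "transpose_mat (map_mat Im M) = - map_mat Im M"
proof (rule eq_matI)
  fix i j assume "i < dim_row (- map_mat Im M)" and "j < dim_col (- map_mat Im M)"
  then have "M $$ (j, i) = cnj (M $$ (i, j))" and "i < n" and "j < n"
    using assms by (auto intro: hermitian_entry)
  then show "transpose_mat (map_mat Im M) $$ (i, j) = (- map_mat Im M) $$ (i, j)"
    using assms(1) by simp
qed (use assms in auto)

definition sympl_partner :: "nat \<Rightarrow> nat" where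
  "sympl_partner i = (if even i then i + 1 else i - 1)"

definition sympl_sign :: "nat \<Rightarrow> real" where
  "sympl_sign i = (if even i then 1 else -1)"

lemma sympl_form_carrier_mat: "sympl_form N \<in> carrier_mat (2*N) (2*N)"
  unfolding sympl_form_def by auto

lemma sympl_form_entry:
  "i < 2*N \<Longrightarrow> j < 2*N \<Longrightarrow>
    sympl_form N $$ (i, j) = (if j = sympl_partner i then sympl_sign i else 0)"
  unfolding sympl_form_def sympl_partner_def sympl_sign_def by (auto elim!: oddE; presburger)

lemma sympl_partner_less: "i < 2*N \<Longrightarrow> sympl_partner i < 2*N"
  unfolding sympl_partner_def by (auto elim!: evenE)

lemma transpose_sympl_form: "transpose_mat (sympl_form N) = - sympl_form N"
  by (rule eq_matI) (auto simp: sympl_form_def elim!: oddE evenE)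

lemma sympl_form_square: "sympl_form N * sympl_form N = - 1\<^sub>m (2*N)"
proof (rule eq_matI)
  fix i j assume "i < dim_row (- 1\<^sub>m (2*N) :: real mat)" and "j < dim_col (- 1\<^sub>m (2*N) :: real mat)"
  then have i: "i < 2*N" and j: "j < 2*N" by auto
  let ?J = "sympl_form N"
  have "(?J * ?J) $$ (i, j) = (\<Sum>k<2*N. ?J $$ (i, k) * ?J $$ (k, j))"
    using i j sympl_form_carrier_mat[of N] by (simp add: scalar_prod_def atLeast0LessThan)
  also have "\<dots> = (\<Sum>k<2*N. if k = sympl_partner i then sympl_sign i * ?J $$ (k, j) else 0)"
    by (rule sum.cong) (use i in \<open>auto simp: sympl_form_entry\<close>)
  also have "\<dots> = sympl_sign i * ?J $$ (sympl_partner i, j)"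
    using sympl_partner_less[OF i] by simp
  also have "\<dots> = (if i = j then -1 else 0)"
    using sympl_partner_less[OF i] j
    by (auto simp: sympl_form_entry sympl_partner_def sympl_sign_def)
  finally show "(?J * ?J) $$ (i, j) = (- 1\<^sub>m (2*N)) $$ (i, j)"
    using i j by simp
qed (auto simp: sympl_form_def)

theorem theorem1:
  fixes N l :: nat and V :: "real mat" and C :: "complex mat"
  assumes "N \<ge> 1"
    and "V \<in> carrier_mat (2*N) (2*N)" and "transpose_mat V = V"
    and "C \<in> carrier_mat (2*N) (2*N)"
  shows "2 * mat_trace (map_mat Im (dagger C * C) * sympl_form N * (sympl_form N * V) ^\<^sub>m (2*l+1))
         + mat_trace (map_mat Re (dagger C * C) * sympl_form N * (sympl_form N * V) ^\<^sub>m (2*l)) = 0"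
proof -
  let ?J = "sympl_form N" and ?M = "dagger C * C"
  let ?P = "\<lambda>k. ?J * (?J * V) ^\<^sub>m k"
  have J: "?J \<in> carrier_mat (2*N) (2*N)"
    by (rule sympl_form_carrier_mat)
  have P: "?P k \<in> carrier_mat (2*N) (2*N)" for k
    using J assms(2) by simp
  have transpose_P: "transpose_mat (?P k) = (if even k then - ?P k else ?P k)" for k
    using J assms(2,3) transpose_sympl_form sympl_form_square by (intro transpose_skew_mult_pow) auto
  have M: "?M \<in> carrier_mat (2*N) (2*N)"
    using assms(4) by (intro mult_carrier_mat dagger_carrier_mat)
  moreover have "dagger ?M = ?M"
    using assms(4) by (rule dagger_gram)
  ultimately have Re: "transpose_mat (map_mat Re ?M) = map_mat Re ?M"
    and Im: "transpose_mat (map_mat Im ?M) = - map_mat Im ?M"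
    by (simp_all add: transpose_Re_hermitian transpose_Im_hermitian)
  have assoc: "A * ?J * (?J * V) ^\<^sub>m k = A * ?P k" if "A \<in> carrier_mat (2*N) (2*N)" for A k
    using that J assms(2) by (intro assoc_mult_mat) auto
  have "mat_trace (map_mat Im ?M * ?P (2*l+1)) = mat_trace (?P (2*l+1) * map_mat Im ?M)"
    using M P[of "2*l+1"] by (intro mat_trace_mult_comm) auto
  also have "\<dots> = 0"
    using M P[of "2*l+1"] transpose_P[of "2*l+1"] Im by (intro mat_trace_mult_symmetric_skew) auto
  moreover have "mat_trace (map_mat Re ?M * ?P (2*l)) = 0"
    using M P[of "2*l"] transpose_P[of "2*l"] Re by (intro mat_trace_mult_symmetric_skew) auto
  ultimately show ?thesis
    using M by (simp add: assoc del: pow_mat.simps)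
qed

end
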